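(* Let $E$ be a reflexive, strictly convex Banach space and $C$ a closed convex subset of $E$. Suppose that $\mathcal{S}=\{T_s:s\in S\}$ is a representation of a semigroup $S$ on $C$ by self-mappings each of which is weakly continuous (i.e. continuous from $(C,\mathrm{wk})$ to $(C,\mathrm{wk})$) and norm asymptotically nonexpansive. Then the following are equivalent: (1) there is a closed, $S$-invariant convex subset $C_0$ of $C$ such that $A_{C_0}(\mathcal{S})\neq\emptyset$; (2) there is a closed, $S$-invariant convex subset $C_0$ of $C$ such that $AA_{C_0}(\mathcal{S})\neq\emptyset$; (3) $S$ has a common fixed point in $C$.
   Context: A representation of a semigroup $S$ on $C$ is a family of maps $T_s:C\to C$ with $T_{st}=T_s\circ T_t$. A map $T:C\to C$ is (norm) asymptotically nonexpansive if $\limsup_{n\to\infty}\|T^nx-T^ny\|\le\|x-y\|$ for all $x,y\in C$ (no continuity is implied by this). For $D\subseteq C$: $A_D(\mathcal{S})$ is the set of $a\in E$ with $\|a-T_sx\|\le\|a-x\|$ for all $x\in D$, $s\in S$ (attractive points); $AA_D(\mathcal{S})$ is the set of $a\in E$ with $\limsup_{n\to\infty}\|a-(T_t)^n x\|\le\|a-x\|$ for all $x\in D$, $t\in S$ (asymptotically attractive points). $C_0$ is $S$-invariant if $T_s(C_0)\subseteq C_0$ for all $s$. A common fixed point is $x\in C$ with $T_sx=x$ for all $s$. *)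

theory Defs
  imports "HOL-Analysis.Analysis"
begin

definition reflexive_space :: "'a::real_normed_vector itself \<Rightarrow> bool" where
  "reflexive_space _ \<longleftrightarrow>
     (\<forall>\<Phi> :: ('a \<Rightarrow> real) \<Rightarrow> real.
        ((\<forall>f g. bounded_linear f \<longrightarrow> bounded_linear g \<longrightarrow> \<Phi> (\<lambda>x. f x + g x) = \<Phi> f + \<Phi> g)
         \<and> (\<forall>f c. bounded_linear f \<longrightarrow> \<Phi> (\<lambda>x. c * f x) = c * \<Phi> f)
         \<and> (\<exists>K. \<forall>f. bounded_linear f \<longrightarrow> \<bar>\<Phi> f\<bar> \<le> K * onorm f))
        \<longrightarrow> (\<exists>x::'a. \<forall>f. bounded_linear f \<longrightarrow> \<Phi> f = f x))"

definition strictly_convex_space :: "'a::real_normed_vector itself \<Rightarrow> bool" where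
  "strictly_convex_space _ \<longleftrightarrow>
     (\<forall>x y::'a. norm x = 1 \<and> norm y = 1 \<and> x \<noteq> y \<longrightarrow> norm ((1/2) *\<^sub>R (x + y)) < 1)"

definition weak_topology :: "'a::real_normed_vector topology" where
  "weak_topology = topology_generated_by {f -` U | f U. bounded_linear (f :: 'a \<Rightarrow> real) \<and> open U}"

definition asymp_nonexpansive_on :: "'a::real_normed_vector set \<Rightarrow> ('a \<Rightarrow> 'a) \<Rightarrow> bool" where
  "asymp_nonexpansive_on C T \<longleftrightarrow>
     (\<forall>x\<in>C. \<forall>y\<in>C. limsup (\<lambda>n. ereal (norm ((T ^^ n) x - (T ^^ n) y))) \<le> ereal (norm (x - y)))"

definition representation_on :: "'a set \<Rightarrow> ('s::semigroup_mult \<Rightarrow> 'a \<Rightarrow> 'a) \<Rightarrow> bool" where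
  "representation_on C T \<longleftrightarrow>
     (\<forall>s. T s ` C \<subseteq> C) \<and> (\<forall>s t. \<forall>x\<in>C. T (s * t) x = T s (T t x))"

definition attractive_points :: "'a set \<Rightarrow> ('s \<Rightarrow> 'a \<Rightarrow> 'a) \<Rightarrow> 'a::real_normed_vector set" where
  "attractive_points D T = {a. \<forall>x\<in>D. \<forall>s. norm (a - T s x) \<le> norm (a - x)}"

definition asymp_attractive_points :: "'a set \<Rightarrow> ('s \<Rightarrow> 'a \<Rightarrow> 'a) \<Rightarrow> 'a::real_normed_vector set" where
  "asymp_attractive_points D T =
     {a. \<forall>x\<in>D. \<forall>t. limsup (\<lambda>n. ereal (norm (a - (T t ^^ n) x))) \<le> ereal (norm (a - x))}"

definition invariant_under :: "'a set \<Rightarrow> ('s \<Rightarrow> 'a \<Rightarrow> 'a) \<Rightarrow> bool" where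
  "invariant_under C0 T \<longleftrightarrow> (\<forall>s. T s ` C0 \<subseteq> C0)"

end

(* (3) gives (1) with C0 = {x}, and attractive points are asymptotically attractive since
   the distances to them decrease along every orbit. For (2) gives (3), let a be an
   asymptotically attractive point for C0 and z the nearest point of C0 to a: it exists by
   reflexivity and is unique by strict convexity. Fix t and a bounded functional f. Hahn-Banach
   in the dual, applied to the sublinear functional g |-> limsup g (T_t^n z), together with
   reflexivity produces a point x with f x = limsup f (T_t^n z) and g x <= limsup g (T_t^n z)
   for all g. Separation puts x in C0, a norming functional gives |a - x| <= |a - z|, so x = z.
   Thus f (T_t^n z) -> f z for all f, i.e. the orbit converges weakly to z, and weak continuity
   of T_t forces T_t z = z. *)

theory Submission
  imports Defs
begin

definition sublinear :: "('v::real_vector \<Rightarrow> real) \<Rightarrow> bool" where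
  "sublinear p \<longleftrightarrow> p 0 = 0 \<and> (\<forall>x y. p (x + y) \<le> p x + p y)
     \<and> (\<forall>c x. c > 0 \<longrightarrow> p (c *\<^sub>R x) \<le> c * p x)"

lemma sublinearI:
  assumes "p 0 = 0" "\<And>x y. p (x + y) \<le> p x + p y" "\<And>c x. c > 0 \<Longrightarrow> p (c *\<^sub>R x) \<le> c * p x"
  shows "sublinear p"
  using assms by (simp add: sublinear_def)

lemma sublinear_add: "sublinear p \<Longrightarrow> p (x + y) \<le> p x + p y"
  by (simp add: sublinear_def)

lemma sublinear_scaleR:
  assumes "sublinear p" "c \<ge> 0" shows "p (c *\<^sub>R x) = c * p x"
proof (cases "c = 0")
  case True then show ?thesis using assms by (simp add: sublinear_def)
next
  case False
  then have c: "c > 0" using assms by simp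
  have hom: "\<forall>c x. c > 0 \<longrightarrow> p (c *\<^sub>R x) \<le> c * p x" using assms by (simp add: sublinear_def)
  have "p ((1/c) *\<^sub>R (c *\<^sub>R x)) \<le> (1/c) * p (c *\<^sub>R x)" by (rule hom[rule_format]) (use c in simp)
  then have "c * p x \<le> p (c *\<^sub>R x)" using c by (simp add: pos_le_divide_eq mult.commute)
  moreover have "p (c *\<^sub>R x) \<le> c * p x" using assms c by (simp add: sublinear_def)
  ultimately show ?thesis by simp
qed

lemma sublinear_neg_le: "sublinear p \<Longrightarrow> - p (- x) \<le> p x"
  using sublinear_add[of p x "- x"] by (simp add: sublinear_def)

lemma sublinear_norm: "sublinear norm"
  by (auto simp: sublinear_def norm_triangle_ineq)

(* Sublinear, below p and at most - p x at - x: so a minimal sublinear functional is odd,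
   hence linear. *)
definition reduce_along :: "('v::real_vector \<Rightarrow> real) \<Rightarrow> 'v \<Rightarrow> 'v \<Rightarrow> real" where
  "reduce_along p x y = (INF t\<in>{0..}. p (y + t *\<^sub>R x) - t * p x)"

lemma reduce_along_le:
  assumes p: "sublinear p" and t: "t \<ge> 0" shows "reduce_along p x y \<le> p (y + t *\<^sub>R x) - t * p x"
  unfolding reduce_along_def
proof (rule cINF_lower)
  have "- p (- y) \<le> p (y + s *\<^sub>R x) - s * p x" if "s \<ge> 0" for s
    using sublinear_add[OF p, of "y + s *\<^sub>R x" "- y"] sublinear_scaleR[OF p that, of x] by simp
  then show "bdd_below ((\<lambda>t. p (y + t *\<^sub>R x) - t * p x) ` {0..})"
    by (intro bdd_belowI2) auto
qed (use t in simp)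

lemma reduce_along_greatest:
  "(\<And>t. t \<ge> 0 \<Longrightarrow> m \<le> p (y + t *\<^sub>R x) - t * p x) \<Longrightarrow> m \<le> reduce_along p x y"
  unfolding reduce_along_def by (intro cINF_greatest) auto

lemma reduce_along_le_self: "sublinear p \<Longrightarrow> reduce_along p x y \<le> p y"
  using reduce_along_le[of p 0] by simp

lemma reduce_along_neg_le: "sublinear p \<Longrightarrow> reduce_along p x (- x) \<le> - p x"
  using reduce_along_le[of p 1 x "- x"] by (simp add: sublinear_def)

lemma sublinear_reduce_along:
  assumes p: "sublinear p" shows "sublinear (reduce_along p x)"
proof (rule sublinearI)
  show "reduce_along p x 0 = 0"
  proof (rule antisym)
    show "reduce_along p x 0 \<le> 0"
      using reduce_along_le_self[OF p, of x 0] p by (simp add: sublinear_def)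
    show "0 \<le> reduce_along p x 0" by (rule reduce_along_greatest) (simp add: sublinear_scaleR[OF p])
  qed
next
  fix y1 y2
  have "reduce_along p x (y1 + y2) - (p (y2 + t2 *\<^sub>R x) - t2 * p x) \<le> reduce_along p x y1"
    if t2: "t2 \<ge> 0" for t2
  proof (rule reduce_along_greatest)
    fix t1 :: real assume t1: "t1 \<ge> 0"
    have "reduce_along p x (y1 + y2) \<le> p ((y1 + t1 *\<^sub>R x) + (y2 + t2 *\<^sub>R x)) - (t1 + t2) * p x"
      using reduce_along_le[OF p, of "t1 + t2" x "y1 + y2"] t1 t2 by (simp add: algebra_simps)
    also have "\<dots> \<le> p (y1 + t1 *\<^sub>R x) + p (y2 + t2 *\<^sub>R x) - (t1 + t2) * p x"
      using sublinear_add[OF p] by simp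
    finally show "reduce_along p x (y1 + y2) - (p (y2 + t2 *\<^sub>R x) - t2 * p x)
        \<le> p (y1 + t1 *\<^sub>R x) - t1 * p x"
      by (simp add: algebra_simps)
  qed
  then have "reduce_along p x (y1 + y2) - reduce_along p x y1 \<le> reduce_along p x y2"
    by (intro reduce_along_greatest) (simp add: algebra_simps)
  then show "reduce_along p x (y1 + y2) \<le> reduce_along p x y1 + reduce_along p x y2" by simp
next
  fix c :: real and y assume c: "c > 0"
  have "reduce_along p x (c *\<^sub>R y) / c \<le> reduce_along p x y"
  proof (rule reduce_along_greatest)
    fix t :: real assume t: "t \<ge> 0"
    have "reduce_along p x (c *\<^sub>R y) \<le> p (c *\<^sub>R (y + t *\<^sub>R x)) - (c * t) * p x"
      using reduce_along_le[OF p, of "c * t" x "c *\<^sub>R y"] c t by (simp add: algebra_simps)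
    also have "\<dots> = c * (p (y + t *\<^sub>R x) - t * p x)"
      using sublinear_scaleR[OF p, of c "y + t *\<^sub>R x"] c by (simp add: algebra_simps)
    finally show "reduce_along p x (c *\<^sub>R y) / c \<le> p (y + t *\<^sub>R x) - t * p x"
      using c by (simp add: field_simps)
  qed
  then show "reduce_along p x (c *\<^sub>R y) \<le> c * reduce_along p x y" using c by (simp add: field_simps)
qed

lemma minimal_sublinear_linear:
  assumes m: "sublinear m" and minimal: "\<And>p. sublinear p \<Longrightarrow> p \<le> m \<Longrightarrow> p = m"
  shows "linear m"
proof -
  have neg: "m (- x) = - m x" for x
  proof -
    have "reduce_along m x = m"
      using sublinear_reduce_along[OF m] reduce_along_le_self[OF m]
      by (intro minimal) (auto simp: le_fun_def)
    then show ?thesis using reduce_along_neg_le[OF m, of x] sublinear_neg_le[OF m, of x] by simp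
  qed
  have add: "m (x + y) = m x + m y" for x y
    using sublinear_add[OF m, of x y] sublinear_add[OF m, of "- x" "- y"] neg[of "x + y"]
    by (simp add: neg)
  have scale: "m (c *\<^sub>R x) = c * m x" for c x
  proof (cases "c \<ge> 0")
    case True then show ?thesis using sublinear_scaleR[OF m] by simp
  next
    case False
    then have "m (c *\<^sub>R x) = - m ((- c) *\<^sub>R x)" using neg[of "(- c) *\<^sub>R x"] by simp
    then show ?thesis using sublinear_scaleR[OF m, of "- c" x] False by simp
  qed
  show ?thesis by (rule linearI) (simp_all add: add scale)
qed

lemma sublinear_chain_Inf:
  assumes ne: "M \<noteq> {}" and below: "\<And>p. p \<in> M \<Longrightarrow> sublinear p \<and> p \<le> q"
    and chain: "\<And>p p'. p \<in> M \<Longrightarrow> p' \<in> M \<Longrightarrow> p \<le> p' \<or> p' \<le> p"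
  shows "sublinear (\<lambda>x. INF p\<in>M. p x)" and "p \<in> M \<Longrightarrow> (\<lambda>x. INF p\<in>M. p x) \<le> p"
proof -
  define u where "u = (\<lambda>x. INF p\<in>M. p x)"
  have bdd: "bdd_below ((\<lambda>p. p x) ` M)" for x
  proof (rule bdd_belowI2)
    fix p assume "p \<in> M"
    then have "sublinear p" "p (- x) \<le> q (- x)" using below by (auto simp: le_fun_def)
    then show "- q (- x) \<le> p x" using sublinear_neg_le[of p x] by linarith
  qed
  have sub: "sublinear p" if "p \<in> M" for p
    using below[OF that] by blast
  have u_le: "u x \<le> p x" if "p \<in> M" for p x
    unfolding u_def by (rule cINF_lower[OF bdd that])
  have u_greatest: "c \<le> u x" if "\<And>p. p \<in> M \<Longrightarrow> c \<le> p x" for c x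
    unfolding u_def using ne that by (rule cINF_greatest)
  show "p \<in> M \<Longrightarrow> u \<le> p" using u_le by (simp add: le_fun_def)
  show "sublinear u"
  proof (rule sublinearI)
    obtain p where p: "p \<in> M" using ne by blast
    show "u 0 = 0"
    proof (rule antisym)
      show "u 0 \<le> 0" using u_le[OF p, of 0] sub[OF p] by (simp add: sublinear_def)
      show "0 \<le> u 0" by (rule u_greatest) (simp add: sub[unfolded sublinear_def])
    qed
  next
    fix x y
    have "u (x + y) - p2 y \<le> u x" if p2: "p2 \<in> M" for p2
    proof (rule u_greatest)
      fix p1 assume p1: "p1 \<in> M"
      obtain p where p: "p \<in> M" "p \<le> p1" "p \<le> p2"
      proof (cases "p1 \<le> p2")
        case True
        then show ?thesis using that[of p1] p1 by simp
      next
        case False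
        then show ?thesis using that[of p2] p2 chain[OF p1 p2] by simp
      qed
      have "u (x + y) \<le> p x + p y"
        using u_le[OF p(1), of "x + y"] sublinear_add[OF sub[OF p(1)], of x y] by linarith
      also have "\<dots> \<le> p1 x + p2 y" using p(2,3) by (simp add: le_fun_def add_mono)
      finally show "u (x + y) - p2 y \<le> p1 x" by simp
    qed
    then have "u (x + y) - u x \<le> u y" by (intro u_greatest) (simp add: algebra_simps)
    then show "u (x + y) \<le> u x + u y" by simp
  next
    fix c :: real and x assume c: "c > 0"
    have "u (c *\<^sub>R x) / c \<le> u x"
    proof (rule u_greatest)
      fix p assume p: "p \<in> M"
      have "u (c *\<^sub>R x) \<le> c * p x"
        using u_le[OF p, of "c *\<^sub>R x"] sublinear_scaleR[OF sub[OF p], of c x] c by simp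
      then show "u (c *\<^sub>R x) / c \<le> p x" using c by (simp add: field_simps)
    qed
    then show "u (c *\<^sub>R x) \<le> c * u x" using c by (simp add: field_simps)
  qed
qed

lemma exists_minimal_sublinear_below:
  assumes q: "sublinear q"
  shows "\<exists>m. sublinear m \<and> m \<le> q \<and> (\<forall>p. sublinear p \<longrightarrow> p \<le> m \<longrightarrow> p = m)"
proof -
  define A where "A = {p. sublinear p \<and> p \<le> q}"
  have "partial_order_on A (relation_of (\<ge>) A)"
    by (rule partial_order_on_relation_ofI) auto
  moreover have "\<exists>u\<in>A. \<forall>p\<in>M. u \<le> p" if M: "M \<in> Chains (relation_of (\<ge>) A)" for M
  proof (cases "M = {}")
    case True
    then show ?thesis using q by (auto simp: A_def)
  next
    case False
    have below: "p \<in> M \<Longrightarrow> sublinear p \<and> p \<le> q" for p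
      using M by (auto simp: Chains_def relation_of_def A_def)
    have chain: "p \<in> M \<Longrightarrow> p' \<in> M \<Longrightarrow> p \<le> p' \<or> p' \<le> p" for p p'
      using M by (auto simp: Chains_def relation_of_def)
    obtain p where p: "p \<in> M" using False by blast
    have "p \<le> q" using below[OF p] by simp
    with sublinear_chain_Inf(2)[OF False below chain p] have "(\<lambda>x. INF p\<in>M. p x) \<le> q"
      by (rule order.trans)
    then show ?thesis
      using sublinear_chain_Inf[OF False below chain] by (auto simp: A_def)
  qed
  ultimately obtain m where "m \<in> A" "\<forall>p\<in>A. p \<le> m \<longrightarrow> p = m"
    using predicate_Zorn[of A "(\<ge>)"] by blast
  then show ?thesis by (auto simp: A_def)
qed

theorem Hahn_Banach_sublinear:
  assumes q: "sublinear q"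
  shows "\<exists>f. linear f \<and> (\<forall>x. f x \<le> q x) \<and> f x0 = q x0"
proof -
  \<comment> \<open>A linear functional below the reduction of q along x0 is forced to take the value
    q x0 at x0.\<close>
  obtain f where f: "sublinear f" "f \<le> reduce_along q x0" "\<And>p. sublinear p \<Longrightarrow> p \<le> f \<Longrightarrow> p = f"
    using exists_minimal_sublinear_below[OF sublinear_reduce_along[OF q]] by blast
  have lin: "linear f" by (rule minimal_sublinear_linear[OF f(1,3)])
  have le: "f x \<le> q x" for x
    using f(2) reduce_along_le_self[OF q, of x0 x] by (meson le_funD order_trans)
  have "q x0 \<le> - f (- x0)"
    using le_funD[OF f(2), of "- x0"] reduce_along_neg_le[OF q, of x0] by linarith
  then have "f x0 = q x0" using le[of x0] linear_neg[OF lin, of x0] by simp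
  with lin le show ?thesis by blast
qed

lemma linear_functional_le_norm:
  fixes g :: "'a::real_normed_vector \<Rightarrow> real"
  assumes g: "linear g" and le: "\<And>y. g y \<le> K * norm y"
  shows "\<bar>g y\<bar> \<le> K * norm y" and "bounded_linear g"
proof -
  have abs_le: "\<bar>g y\<bar> \<le> K * norm y" for y
    using le[of y] le[of "- y"] linear_neg[OF g, of y] by simp
  then show "\<bar>g y\<bar> \<le> K * norm y" .
  show "bounded_linear g"
    using abs_le by (intro bounded_linear_intro[where K=K])
      (auto simp: linear_add[OF g] linear_scale[OF g] mult.commute)
qed

lemma exists_norming_functional:
  fixes x :: "'a::real_normed_vector"
  obtains g where "bounded_linear g" "\<And>y. \<bar>g y\<bar> \<le> norm y" "g x = norm x"
proof -
  obtain g where g: "linear g" "\<forall>y. g y \<le> norm y" "g x = norm x"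
    using Hahn_Banach_sublinear[OF sublinear_norm] by blast
  then show ?thesis using linear_functional_le_norm[OF g(1), of 1] that by simp
qed

lemma bounded_linear_functionals_separate_points:
  fixes x y :: "'a::real_normed_vector"
  assumes "\<And>g::'a \<Rightarrow> real. bounded_linear g \<Longrightarrow> g x = g y"
  shows "x = y"
proof -
  obtain g where g: "bounded_linear g" "g (x - y) = norm (x - y)"
    using exists_norming_functional by metis
  then show ?thesis using assms[OF g(1)] by (simp add: linear_diff bounded_linear.linear)
qed

(* A linear functional below cone_gauge K \<delta> is bounded by the norm (t = 0) and is at least
   \<delta> on K (take y = - k and t = 1). *)
definition cone_gauge :: "'a::real_normed_vector set \<Rightarrow> real \<Rightarrow> 'a \<Rightarrow> real" where
  "cone_gauge K \<delta> y = (INF (t, k)\<in>{0..} \<times> K. norm (y + t *\<^sub>R k) - t * \<delta>)"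

lemma cone_gauge_greatest:
  assumes "K \<noteq> {}" "\<And>t k. t \<ge> 0 \<Longrightarrow> k \<in> K \<Longrightarrow> m \<le> norm (y + t *\<^sub>R k) - t * \<delta>"
  shows "m \<le> cone_gauge K \<delta> y"
  unfolding cone_gauge_def using assms by (intro cINF_greatest) auto

context
  fixes K :: "'a::real_normed_vector set" and \<delta> :: real
  assumes far: "\<And>k. k \<in> K \<Longrightarrow> \<delta> \<le> norm k"
begin

lemma cone_gauge_le:
  assumes "t \<ge> 0" "k \<in> K" shows "cone_gauge K \<delta> y \<le> norm (y + t *\<^sub>R k) - t * \<delta>"
  unfolding cone_gauge_def
proof (rule cINF_lower2)
  have "- norm y \<le> norm (y + s *\<^sub>R k) - s * \<delta>" if "s \<ge> 0" "k \<in> K" for s k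
    using norm_triangle_ineq4[of "y + s *\<^sub>R k" y] mult_left_mono[OF far[OF that(2)] that(1)] that(1)
    by simp
  then show "bdd_below ((\<lambda>(t, k). norm (y + t *\<^sub>R k) - t * \<delta>) ` ({0..} \<times> K))"
    by (intro bdd_belowI2[where m="- norm y"]) auto
qed (use assms in auto)

lemma cone_gauge_add:
  assumes "convex K" "K \<noteq> {}"
  shows "cone_gauge K \<delta> (y1 + y2) \<le> cone_gauge K \<delta> y1 + cone_gauge K \<delta> y2"
proof -
  \<comment> \<open>Two points t1 k1 and t2 k2 of the cone combine to (t1 + t2) k with k \<in> K by convexity.\<close>
  have sum_le: "cone_gauge K \<delta> (y1 + y2)
      \<le> (norm (y1 + t1 *\<^sub>R k1) - t1 * \<delta>) + (norm (y2 + t2 *\<^sub>R k2) - t2 * \<delta>)"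
    if t1: "t1 \<ge> 0" and k1: "k1 \<in> K" and t2: "t2 \<ge> 0" and k2: "k2 \<in> K" for t1 k1 t2 k2
  proof (cases "t1 + t2 = 0")
    case True
    then have "t1 = 0" "t2 = 0" using t1 t2 by auto
    then show ?thesis using cone_gauge_le[of 0 k1 "y1 + y2"] k1 norm_triangle_ineq[of y1 y2] by simp
  next
    case False
    define s where "s = t1 + t2"
    have s: "s > 0" using False t1 t2 by (simp add: s_def)
    define k where "k = (t1 / s) *\<^sub>R k1 + (t2 / s) *\<^sub>R k2"
    have k: "k \<in> K" unfolding k_def using assms(1) k1 k2 t1 t2 s
      by (intro convexD) (auto simp: s_def add_divide_distrib[symmetric])
    have "s *\<^sub>R k = t1 *\<^sub>R k1 + t2 *\<^sub>R k2" using s by (simp add: k_def scaleR_add_right)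
    then have "cone_gauge K \<delta> (y1 + y2) \<le> norm ((y1 + t1 *\<^sub>R k1) + (y2 + t2 *\<^sub>R k2)) - s * \<delta>"
      using cone_gauge_le[of s k "y1 + y2"] s k by (simp add: algebra_simps)
    then show ?thesis
      using norm_triangle_ineq[of "y1 + t1 *\<^sub>R k1" "y2 + t2 *\<^sub>R k2"]
      by (simp add: s_def algebra_simps)
  qed
  have "cone_gauge K \<delta> (y1 + y2) - (norm (y2 + t2 *\<^sub>R k2) - t2 * \<delta>) \<le> cone_gauge K \<delta> y1"
    if "t2 \<ge> 0" "k2 \<in> K" for t2 k2
  proof (rule cone_gauge_greatest[OF assms(2)])
    fix t1 :: real and k1 assume "t1 \<ge> 0" "k1 \<in> K"
    then show "cone_gauge K \<delta> (y1 + y2) - (norm (y2 + t2 *\<^sub>R k2) - t2 * \<delta>)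
        \<le> norm (y1 + t1 *\<^sub>R k1) - t1 * \<delta>"
      using sum_le[of t1 k1 t2 k2] that by linarith
  qed
  then have "cone_gauge K \<delta> (y1 + y2) - cone_gauge K \<delta> y1 \<le> cone_gauge K \<delta> y2"
    using assms(2) by (intro cone_gauge_greatest) (auto simp: algebra_simps)
  then show ?thesis by simp
qed

lemma cone_gauge_scaleR:
  assumes "K \<noteq> {}" "c > 0"
  shows "cone_gauge K \<delta> (c *\<^sub>R y) \<le> c * cone_gauge K \<delta> y"
proof -
  have "cone_gauge K \<delta> (c *\<^sub>R y) / c \<le> cone_gauge K \<delta> y"
  proof (rule cone_gauge_greatest[OF assms(1)])
    fix t :: real and k assume t: "t \<ge> 0" and k: "k \<in> K"
    have "cone_gauge K \<delta> (c *\<^sub>R y) \<le> norm (c *\<^sub>R (y + t *\<^sub>R k)) - (c * t) * \<delta>"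
      using cone_gauge_le[of "c * t" k "c *\<^sub>R y"] t k assms(2) by (simp add: algebra_simps)
    also have "\<dots> = c * (norm (y + t *\<^sub>R k) - t * \<delta>)"
      using assms(2) by (simp only: norm_scaleR abs_of_pos) (simp add: algebra_simps)
    finally show "cone_gauge K \<delta> (c *\<^sub>R y) / c \<le> norm (y + t *\<^sub>R k) - t * \<delta>"
      using assms(2) by (simp add: field_simps)
  qed
  then show ?thesis using assms(2) by (simp add: field_simps)
qed

lemma sublinear_cone_gauge:
  assumes "convex K" "K \<noteq> {}"
  shows "sublinear (cone_gauge K \<delta>)"
proof (rule sublinearI)
  obtain k0 where k0: "k0 \<in> K" using assms(2) by blast
  show "cone_gauge K \<delta> 0 = 0"
  proof (rule antisym)
    show "cone_gauge K \<delta> 0 \<le> 0" using cone_gauge_le[of 0 k0 0] k0 by simp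
    show "0 \<le> cone_gauge K \<delta> 0"
      using assms(2) far by (intro cone_gauge_greatest) (auto simp: mult_left_mono)
  qed
qed (use cone_gauge_add[OF assms] cone_gauge_scaleR[OF assms(2)] in auto)

lemma exists_functional_ge_on_convex:
  assumes "convex K" "K \<noteq> {}"
  obtains f where "bounded_linear f" "\<And>k. k \<in> K \<Longrightarrow> \<delta> \<le> f k"
proof -
  obtain f where f: "linear f" "\<forall>y. f y \<le> cone_gauge K \<delta> y"
    using Hahn_Banach_sublinear[OF sublinear_cone_gauge[OF assms]] by blast
  obtain k0 where k0: "k0 \<in> K" using assms(2) by blast
  have "f y \<le> 1 * norm y" for y
  proof -
    have "f y \<le> cone_gauge K \<delta> y" using f(2) by blast
    also have "\<dots> \<le> norm y" using cone_gauge_le[of 0 k0 y] k0 by simp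
    finally show ?thesis by simp
  qed
  then have "bounded_linear f" using linear_functional_le_norm[OF f(1)] by blast
  moreover have "\<delta> \<le> f k" if k: "k \<in> K" for k
  proof -
    have "f (- k) \<le> cone_gauge K \<delta> (- k)" using f(2) by blast
    also have "\<dots> \<le> - \<delta>" using cone_gauge_le[of 1 k "- k"] k by simp
    finally have "f (- k) \<le> - \<delta>" .
    then show ?thesis using linear_neg[OF f(1), of k] by simp
  qed
  ultimately show ?thesis using that by blast
qed

end

definition limsup_functional :: "(nat \<Rightarrow> 'a::real_normed_vector) \<Rightarrow> ('a \<Rightarrow>\<^sub>L real) \<Rightarrow> real" where
  "limsup_functional v g = real_of_ereal (limsup (\<lambda>n. ereal (blinfun_apply g (v n))))"

context
  fixes v :: "nat \<Rightarrow> 'a::real_normed_vector" and B :: real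
  assumes bounded: "\<And>n. norm (v n) \<le> B"
begin

lemma limsup_blinfun_bounds:
  fixes g :: "'a \<Rightarrow>\<^sub>L real"
  shows "limsup (\<lambda>n. ereal (blinfun_apply g (v n))) \<le> ereal (norm g * B)"
    and "ereal (- (norm g * B)) \<le> limsup (\<lambda>n. ereal (blinfun_apply g (v n)))"
proof -
  have bound: "\<bar>blinfun_apply g (v n)\<bar> \<le> norm g * B" for n
  proof -
    have "\<bar>blinfun_apply g (v n)\<bar> \<le> norm g * norm (v n)" using norm_blinfun[of g "v n"] by simp
    also have "\<dots> \<le> norm g * B" by (rule mult_left_mono) (simp_all add: bounded)
    finally show ?thesis .
  qed
  have "blinfun_apply g (v n) \<le> norm g * B" "- (norm g * B) \<le> blinfun_apply g (v n)" for n
    using bound[of n] by linarith+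
  then show "limsup (\<lambda>n. ereal (blinfun_apply g (v n))) \<le> ereal (norm g * B)"
    and "ereal (- (norm g * B)) \<le> limsup (\<lambda>n. ereal (blinfun_apply g (v n)))"
    by (intro Limsup_bounded le_Limsup; simp)+
qed

lemma ereal_limsup_functional:
  "limsup (\<lambda>n. ereal (blinfun_apply g (v n))) = ereal (limsup_functional v g)"
proof -
  have "\<bar>limsup (\<lambda>n. ereal (blinfun_apply g (v n)))\<bar> \<noteq> \<infinity>"
    using limsup_blinfun_bounds[of g] by auto
  then show ?thesis by (simp add: limsup_functional_def ereal_real')
qed

lemma limsup_functional_le: "limsup_functional v g \<le> norm g * B"
  using limsup_blinfun_bounds(1)[of g] by (simp add: ereal_limsup_functional)

lemma sublinear_limsup_functional: "sublinear (limsup_functional v)"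
proof (rule sublinearI)
  show "limsup_functional v 0 = 0"
    by (simp add: limsup_functional_def Limsup_const zero_ereal_def)
next
  fix g h :: "'a \<Rightarrow>\<^sub>L real"
  have "ereal (limsup_functional v (g + h))
      = limsup (\<lambda>n. ereal (blinfun_apply g (v n)) + ereal (blinfun_apply h (v n)))"
    by (simp add: ereal_limsup_functional[symmetric] blinfun.add_left)
  also have "\<dots> \<le> limsup (\<lambda>n. ereal (blinfun_apply g (v n)))
      + limsup (\<lambda>n. ereal (blinfun_apply h (v n)))"
    by (rule ereal_limsup_add_mono)
  finally show "limsup_functional v (g + h) \<le> limsup_functional v g + limsup_functional v h"
    by (simp add: ereal_limsup_functional)
next
  fix c :: real and g :: "'a \<Rightarrow>\<^sub>L real" assume c: "c > 0"
  have "ereal (limsup_functional v (c *\<^sub>R g)) = limsup (\<lambda>n. ereal c * ereal (blinfun_apply g (v n)))"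
    by (simp add: ereal_limsup_functional[symmetric] blinfun.scaleR_left)
  also have "\<dots> = ereal c * limsup (\<lambda>n. ereal (blinfun_apply g (v n)))"
    by (rule limsup_ereal_mult_left) (use c in simp_all)
  finally show "limsup_functional v (c *\<^sub>R g) \<le> c * limsup_functional v g"
    by (simp add: ereal_limsup_functional)
qed

end

lemma reflexive_space_dual_functional:
  fixes \<Psi> :: "('a::real_normed_vector \<Rightarrow>\<^sub>L real) \<Rightarrow> real"
  assumes refl: "reflexive_space TYPE('a)" and \<Psi>: "linear \<Psi>" "\<And>g. \<bar>\<Psi> g\<bar> \<le> K * norm g"
  obtains x where "\<And>g. \<Psi> g = blinfun_apply g x"
proof -
  have "\<exists>x. \<forall>f. bounded_linear f \<longrightarrow> \<Psi> (Blinfun f) = f x"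
  proof (rule refl[unfolded reflexive_space_def, rule_format], intro conjI allI impI)
    fix f g :: "'a \<Rightarrow> real" assume "bounded_linear f" "bounded_linear g"
    then have "Blinfun (\<lambda>x. f x + g x) = Blinfun f + Blinfun g"
      by (intro blinfun_eqI)
        (simp add: bounded_linear_Blinfun_apply bounded_linear_add blinfun.add_left)
    then show "\<Psi> (Blinfun (\<lambda>x. f x + g x)) = \<Psi> (Blinfun f) + \<Psi> (Blinfun g)"
      by (simp add: linear_add[OF \<Psi>(1)])
  next
    fix f :: "'a \<Rightarrow> real" and c :: real assume "bounded_linear f"
    then have "Blinfun (\<lambda>x. c * f x) = c *\<^sub>R Blinfun f"
      by (intro blinfun_eqI)
        (simp add: bounded_linear_Blinfun_apply bounded_linear_const_mult blinfun.scaleR_left)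
    then show "\<Psi> (Blinfun (\<lambda>x. c * f x)) = c * \<Psi> (Blinfun f)"
      by (simp add: linear_scale[OF \<Psi>(1)])
  next
    show "\<exists>K. \<forall>f. bounded_linear f \<longrightarrow> \<bar>\<Psi> (Blinfun f)\<bar> \<le> K * onorm f"
      using \<Psi>(2) by (metis norm_blinfun.rep_eq bounded_linear_Blinfun_apply)
  qed
  then obtain x where "\<And>f. bounded_linear f \<Longrightarrow> \<Psi> (Blinfun f) = f x" by blast
  then have "\<Psi> g = blinfun_apply g x" for g
    using blinfun.bounded_linear_right[of g] by (metis blinfun_apply_inverse)
  with that show ?thesis by blast
qed

lemma reflexive_limsup_point:
  fixes v :: "nat \<Rightarrow> 'a::real_normed_vector"
  assumes refl: "reflexive_space TYPE('a)" and "Bseq v" and f0: "bounded_linear f0"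
  obtains x where "\<And>f. bounded_linear f \<Longrightarrow> ereal (f x) \<le> limsup (\<lambda>n. ereal (f (v n)))"
    and "ereal (f0 x) = limsup (\<lambda>n. ereal (f0 (v n)))"
proof -
  obtain B where B: "\<And>n. norm (v n) \<le> B" using \<open>Bseq v\<close> by (meson BseqE)
  let ?q = "limsup_functional v"
  note q_sublinear = sublinear_limsup_functional[where v=v and B=B, OF B]
    and q_le = limsup_functional_le[where v=v and B=B, OF B]
    and q_eq = ereal_limsup_functional[where v=v and B=B, OF B, symmetric]
  \<comment> \<open>Hahn-Banach in the dual yields a functional on the dual below the limsup; reflexivity
    represents it by a point of the space.\<close>
  obtain \<Psi> where \<Psi>: "linear \<Psi>" "\<And>g. \<Psi> g \<le> ?q g" "\<Psi> (Blinfun f0) = ?q (Blinfun f0)"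
    using Hahn_Banach_sublinear[OF q_sublinear] by blast
  have "\<bar>\<Psi> g\<bar> \<le> B * norm g" for g
    using \<Psi>(2)[of g] \<Psi>(2)[of "- g"] q_le[of g] q_le[of "- g"] linear_neg[OF \<Psi>(1), of g]
    by (simp add: mult.commute)
  then obtain x where x: "\<And>g. \<Psi> g = blinfun_apply g x"
    using reflexive_space_dual_functional[OF refl \<Psi>(1)] by blast
  show ?thesis
  proof
    fix f :: "'a \<Rightarrow> real" assume f: "bounded_linear f"
    have "ereal (f x) \<le> ereal (?q (Blinfun f))"
      using \<Psi>(2)[of "Blinfun f"] x[of "Blinfun f"] by (simp add: bounded_linear_Blinfun_apply[OF f])
    then show "ereal (f x) \<le> limsup (\<lambda>n. ereal (f (v n)))"
      by (simp add: q_eq bounded_linear_Blinfun_apply[OF f])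
  next
    show "ereal (f0 x) = limsup (\<lambda>n. ereal (f0 (v n)))"
      using \<Psi>(3) x[of "Blinfun f0"] by (simp add: q_eq bounded_linear_Blinfun_apply[OF f0])
  qed
qed

lemma limsup_point_mem_closed_convex:
  fixes K :: "'a::real_normed_vector set"
  assumes "closed K" "convex K" and v: "\<And>n. v n \<in> K"
    and dominated: "\<And>f. bounded_linear f \<Longrightarrow> ereal (f x) \<le> limsup (\<lambda>n. ereal (f (v n)))"
  shows "x \<in> K"
proof (rule ccontr)
  assume "x \<notin> K"
  then obtain e where e: "e > 0" "ball x e \<subseteq> - K"
    using \<open>closed K\<close> open_contains_ball[of "- K"] by (auto simp: closed_def)
  have far: "e \<le> norm k" if "k \<in> (\<lambda>k. k - x) ` K" for k
    using that e(2) by (force simp: subset_eq dist_norm norm_minus_commute)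
  obtain f where f: "bounded_linear f" "\<And>k. k \<in> (\<lambda>k. k - x) ` K \<Longrightarrow> e \<le> f k"
    using exists_functional_ge_on_convex[OF far convex_translation_subtract[OF \<open>convex K\<close>]] v
    by blast
  have below: "- f (v n) \<le> - f x - e" for n
    using f(2)[of "v n - x"] v[of n] linear_diff[OF bounded_linear.linear[OF f(1)]] by simp
  have "ereal (- f x) \<le> limsup (\<lambda>n. ereal (- f (v n)))"
    using dominated[of "\<lambda>y. - f y"] bounded_linear_minus[OF f(1)] by blast
  also have "\<dots> \<le> ereal (- f x - e)"
    by (intro Limsup_bounded always_eventually allI) (use below in simp)
  finally show False using e(1) by simp
qed

lemma limsup_point_norm_diff_le:
  fixes x :: "'a::real_normed_vector"
  assumes limsup_le: "limsup (\<lambda>n. ereal (norm (a - v n))) \<le> ereal r"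
    and dominated: "\<And>f. bounded_linear f \<Longrightarrow> ereal (f x) \<le> limsup (\<lambda>n. ereal (f (v n)))"
  shows "norm (a - x) \<le> r"
proof -
  obtain g where g: "bounded_linear g" "\<And>y. \<bar>g y\<bar> \<le> norm y" "g (a - x) = norm (a - x)"
    using exists_norming_functional by metis
  have g_diff: "g (y - z) = g y - g z" for y z
    using linear_diff[OF bounded_linear.linear[OF g(1)]] .
  have "ereal (- g x) \<le> limsup (\<lambda>n. ereal (- g (v n)))"
    using dominated[of "\<lambda>y. - g y"] bounded_linear_minus[OF g(1)] by blast
  also have "\<dots> \<le> limsup (\<lambda>n. ereal (norm (a - v n)) + ereal (- g a))"
  proof (intro Limsup_mono always_eventually allI)
    fix n
    show "ereal (- g (v n)) \<le> ereal (norm (a - v n)) + ereal (- g a)"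
      using g(2)[of "a - v n"] g_diff[of a "v n"] by (simp add: abs_le_iff)
  qed
  also have "\<dots> \<le> limsup (\<lambda>n. ereal (norm (a - v n))) + limsup (\<lambda>n. ereal (- g a))"
    by (rule ereal_limsup_add_mono)
  also have "\<dots> \<le> ereal r + ereal (- g a)"
    using add_right_mono[OF limsup_le, of "ereal (- g a)"] by (simp add: Limsup_const)
  finally show ?thesis using g(3) g_diff[of a x] by simp
qed

lemma Bseq_if_limsup_norm_diff_le:
  assumes "limsup (\<lambda>n. ereal (norm (a - v n))) \<le> ereal r"
  shows "Bseq v"
proof (rule Bseq_eventually_mono)
  have "limsup (\<lambda>n. ereal (norm (a - v n))) < ereal (r + 1)"
    using assms by (simp add: le_less_trans)
  then have "eventually (\<lambda>n. norm (a - v n) < r + 1) sequentially"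
    by (auto dest: Limsup_lessD)
  then show "eventually (\<lambda>n. norm (v n) \<le> norm (norm a + \<bar>r\<bar> + 1)) sequentially"
  proof (rule eventually_mono)
    fix n assume "norm (a - v n) < r + 1"
    then show "norm (v n) \<le> norm (norm a + \<bar>r\<bar> + 1)"
      using norm_triangle_ineq2[of "v n" a] by (simp add: norm_minus_commute)
  qed
qed simp

lemma nearest_point_exists:
  fixes K :: "'a::real_normed_vector set"
  assumes refl: "reflexive_space TYPE('a)" and "closed K" "convex K" "K \<noteq> {}"
  obtains z where "z \<in> K" "\<And>y. y \<in> K \<Longrightarrow> norm (a - z) \<le> norm (a - y)"
proof -
  define d where "d = infdist a K"
  have "\<exists>y\<in>K. dist a y < d + inverse (real (Suc n))" for n
  proof -
    have "(INF y\<in>K. dist a y) < d + inverse (real (Suc n))"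
      by (simp add: d_def infdist_notempty[OF \<open>K \<noteq> {}\<close>])
    then show ?thesis
      using \<open>K \<noteq> {}\<close> by (subst (asm) cINF_less_iff) (auto intro: bdd_belowI2[where m=0])
  qed
  then obtain v where v: "\<And>n. v n \<in> K" and close: "\<And>n. norm (a - v n) \<le> d + inverse (real (Suc n))"
    by (metis dist_norm less_imp_le)
  have "limsup (\<lambda>n. ereal (norm (a - v n))) \<le> limsup (\<lambda>n. ereal (d + inverse (real (Suc n))))"
    using close by (intro Limsup_mono always_eventually) simp
  also have "\<dots> = ereal d"
    by (intro lim_imp_Limsup tendsto_ereal LIMSEQ_inverse_real_of_nat_add) simp
  finally have limsup_le: "limsup (\<lambda>n. ereal (norm (a - v n))) \<le> ereal d" .
  obtain x where x: "\<And>f. bounded_linear f \<Longrightarrow> ereal (f x) \<le> limsup (\<lambda>n. ereal (f (v n)))"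
    using reflexive_limsup_point[OF refl Bseq_if_limsup_norm_diff_le[OF limsup_le]
        bounded_linear_zero]
    by blast
  have "x \<in> K" using limsup_point_mem_closed_convex[where v=v, OF assms(2,3) v x] .
  moreover have "norm (a - x) \<le> norm (a - y)" if "y \<in> K" for y
    using limsup_point_norm_diff_le[where v=v, OF limsup_le x] infdist_le[OF that, of a]
    by (simp add: d_def dist_norm)
  ultimately show ?thesis using that by blast
qed

lemma strictly_convex_norm_midpoint_less:
  fixes u w :: "'a::real_normed_vector"
  assumes sc: "strictly_convex_space TYPE('a)" and "norm u = d" "norm w = d" "u \<noteq> w"
  shows "norm ((1/2) *\<^sub>R (u + w)) < d"
proof -
  have d: "d > 0" using assms(2-4) by auto
  have "norm ((1/2) *\<^sub>R ((1/d) *\<^sub>R u + (1/d) *\<^sub>R w)) < 1"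
    using sc assms(2-4) d unfolding strictly_convex_space_def by auto
  then show ?thesis using d by (simp add: scaleR_add_right[symmetric] divide_simps)
qed

lemma nearest_point_unique:
  fixes K :: "'a::real_normed_vector set"
  assumes sc: "strictly_convex_space TYPE('a)" and "convex K" "z \<in> K" "x \<in> K"
    and nearest: "\<And>y. y \<in> K \<Longrightarrow> norm (a - z) \<le> norm (a - y)"
    and "norm (a - x) \<le> norm (a - z)"
  shows "x = z"
proof (rule ccontr)
  assume "x \<noteq> z"
  have "(1/2) *\<^sub>R x + (1/2) *\<^sub>R z \<in> K" using assms(2-4) by (intro convexD) auto
  then have "norm (a - z) \<le> norm ((1/2) *\<^sub>R ((a - x) + (a - z)))"
    using nearest by (simp add: algebra_simps flip: scaleR_add_right)
  moreover have "norm ((1/2) *\<^sub>R ((a - x) + (a - z))) < norm (a - z)"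
    using \<open>x \<noteq> z\<close> nearest[OF \<open>x \<in> K\<close>] assms(6)
    by (intro strictly_convex_norm_midpoint_less[OF sc]) auto
  ultimately show False by simp
qed

lemma functional_tendsto_nearest_point:
  fixes K :: "'a::real_normed_vector set" and f :: "'a \<Rightarrow> real"
  assumes refl: "reflexive_space TYPE('a)" and sc: "strictly_convex_space TYPE('a)"
    and K: "closed K" "convex K" and w: "\<And>n. w n \<in> K" and "z \<in> K"
    and nearest: "\<And>y. y \<in> K \<Longrightarrow> norm (a - z) \<le> norm (a - y)"
    and limsup_le: "limsup (\<lambda>n. ereal (norm (a - w n))) \<le> ereal (norm (a - z))"
    and f: "bounded_linear f"
  shows "(\<lambda>n. f (w n)) \<longlonglongrightarrow> f z"
proof -
  have limsup_eq: "ereal (g z) = limsup (\<lambda>n. ereal (g (w n)))"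
    if g: "bounded_linear g" for g :: "'a \<Rightarrow> real"
  proof -
    obtain x where x: "\<And>f. bounded_linear f \<Longrightarrow> ereal (f x) \<le> limsup (\<lambda>n. ereal (f (w n)))"
      and gx: "ereal (g x) = limsup (\<lambda>n. ereal (g (w n)))"
      using reflexive_limsup_point[OF refl Bseq_if_limsup_norm_diff_le[OF limsup_le] g] by blast
    have "x = z"
      using nearest_point_unique[OF sc K(2) \<open>z \<in> K\<close>
          limsup_point_mem_closed_convex[where v=w, OF K w x]
          nearest limsup_point_norm_diff_le[where v=w, OF limsup_le x]] .
    then show ?thesis using gx by simp
  qed
  have "ereal (- f z) = limsup (\<lambda>n. - ereal (f (w n)))"
    using limsup_eq[of "\<lambda>y. - f y"] bounded_linear_minus[OF f] by simp
  also have "\<dots> = - liminf (\<lambda>n. ereal (f (w n)))" by (rule ereal_Limsup_uminus)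
  finally have "liminf (\<lambda>n. ereal (f (w n))) = ereal (f z)"
    by (metis ereal_uminus_uminus uminus_ereal.simps(1))
  then show ?thesis using limsup_eq[OF f] by (intro limsup_le_liminf_real) simp_all
qed

lemma topspace_weak_topology: "topspace (weak_topology :: 'a::real_normed_vector topology) = UNIV"
proof -
  have "UNIV \<in> {f -` U | f U. bounded_linear (f :: 'a \<Rightarrow> real) \<and> open U}"
    by (intro CollectI exI[of _ "\<lambda>_. 0"] exI[of _ UNIV]) (simp add: bounded_linear_zero)
  then show ?thesis unfolding weak_topology_def topology_generated_by_topspace by blast
qed

lemma limitin_weak_topology:
  fixes w :: "'b \<Rightarrow> 'a::real_normed_vector"
  shows "limitin weak_topology w z F \<longleftrightarrow> (\<forall>f::'a \<Rightarrow> real. bounded_linear f \<longrightarrow> ((\<lambda>n. f (w n)) \<longlongrightarrow> f z) F)"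
proof (intro iffI allI impI)
  fix f :: "'a \<Rightarrow> real" assume lim: "limitin weak_topology w z F" and f: "bounded_linear f"
  show "((\<lambda>n. f (w n)) \<longlongrightarrow> f z) F"
  proof (rule topological_tendstoI)
    fix V assume V: "open V" "f z \<in> V"
    have "openin weak_topology (f -` V)"
      unfolding weak_topology_def by (rule topology_generated_by_Basis) (use f V in blast)
    then show "eventually (\<lambda>n. f (w n) \<in> V) F" using lim V(2) unfolding limitin_def by auto
  qed
next
  assume conv: "\<forall>f::'a \<Rightarrow> real. bounded_linear f \<longrightarrow> ((\<lambda>n. f (w n)) \<longlongrightarrow> f z) F"
  have "z \<in> U \<longrightarrow> eventually (\<lambda>n. w n \<in> U) F"
    if "generate_topology_on {f -` U | f U. bounded_linear (f :: 'a \<Rightarrow> real) \<and> open U} U" for U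
    using that
  proof (induction rule: generate_topology_on.induct)
    case (Int a b) then show ?case by (auto intro: eventually_conj)
  next
    case (UN K)
    show ?case
    proof
      assume "z \<in> \<Union>K"
      then obtain X where "X \<in> K" "z \<in> X" by blast
      then have "eventually (\<lambda>n. w n \<in> X) F" using UN.IH by blast
      then show "eventually (\<lambda>n. w n \<in> \<Union>K) F" by (rule eventually_mono) (use \<open>X \<in> K\<close> in blast)
    qed
  next
    case (Basis s)
    then obtain f :: "'a \<Rightarrow> real" and V where "s = f -` V" "bounded_linear f" "open V" by blast
    then show ?case using conv topological_tendstoD[of "\<lambda>n. f (w n)" "f z" F V] by auto
  qed simp
  then show "limitin weak_topology w z F"
    unfolding limitin_def topspace_weak_topology
    unfolding weak_topology_def openin_topology_generated_by_iff
    by blast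
qed

lemma funpow_in_invariant: "F ` K \<subseteq> K \<Longrightarrow> x \<in> K \<Longrightarrow> (F ^^ n) x \<in> K"
  by (induction n) auto

lemma nearest_point_fixed_point:
  fixes K :: "'a::real_normed_vector set" and F :: "'a \<Rightarrow> 'a"
  assumes refl: "reflexive_space TYPE('a)" and sc: "strictly_convex_space TYPE('a)"
    and K: "closed K" "convex K" "K \<subseteq> C" "F ` K \<subseteq> K"
    and cont: "continuous_map (subtopology weak_topology C) (subtopology weak_topology C) F"
    and "z \<in> K" and nearest: "\<And>y. y \<in> K \<Longrightarrow> norm (a - z) \<le> norm (a - y)"
    and attracted: "limsup (\<lambda>n. ereal (norm (a - (F ^^ n) z))) \<le> ereal (norm (a - z))"
  shows "F z = z"
proof -
  define w where "w n = (F ^^ n) z" for n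
  have w: "w n \<in> K" for n unfolding w_def using funpow_in_invariant[OF K(4) \<open>z \<in> K\<close>] .
  have conv: "(\<lambda>n. f (w n)) \<longlonglongrightarrow> f z" if "bounded_linear f" for f :: "'a \<Rightarrow> real"
    using functional_tendsto_nearest_point[OF refl sc K(1,2) w \<open>z \<in> K\<close> nearest _ that] attracted
    by (simp add: w_def)
  then have "limitin (subtopology weak_topology C) w z sequentially"
    using w K(3) \<open>z \<in> K\<close> by (auto simp: limitin_subtopology limitin_weak_topology subsetD)
  then have "limitin (subtopology weak_topology C) (F \<circ> w) (F z) sequentially"
    by (rule continuous_map_limit[OF cont])
  moreover have "F \<circ> w = (\<lambda>n. w (Suc n))" by (simp add: w_def fun_eq_iff)
  \<comment> \<open>Weak limits are unique: the shifted orbit tends weakly to both z and F z.\<close>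
  ultimately have "(\<lambda>n. f (w (Suc n))) \<longlonglongrightarrow> f (F z)" if "bounded_linear f" for f :: "'a \<Rightarrow> real"
    using that by (simp add: limitin_subtopology limitin_weak_topology)
  then have "f (F z) = f z" if "bounded_linear f" for f :: "'a \<Rightarrow> real"
    using LIMSEQ_unique LIMSEQ_Suc[OF conv[OF that]] that by blast
  then show ?thesis by (rule bounded_linear_functionals_separate_points)
qed

lemma attractive_points_subset_asymp_attractive_points:
  assumes "invariant_under K T"
  shows "attractive_points K T \<subseteq> asymp_attractive_points K T"
proof
  fix a assume a: "a \<in> attractive_points K T"
  have "norm (a - (T t ^^ n) x) \<le> norm (a - x)" if "x \<in> K" for x t n
  proof (induction n)
    case (Suc n)
    have "(T t ^^ n) x \<in> K"
      using funpow_in_invariant assms \<open>x \<in> K\<close> by (metis invariant_under_def)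
    then have "norm (a - T t ((T t ^^ n) x)) \<le> norm (a - (T t ^^ n) x)"
      using a by (simp add: attractive_points_def)
    then show ?case using Suc.IH by simp
  qed simp
  then show "a \<in> asymp_attractive_points K T"
    unfolding asymp_attractive_points_def by (auto intro!: Limsup_bounded always_eventually)
qed

lemma common_fixed_point_if_asymp_attractive_points:
  fixes K :: "'a::real_normed_vector set"
  assumes refl: "reflexive_space TYPE('a)" and sc: "strictly_convex_space TYPE('a)"
    and cont: "\<And>s. continuous_map (subtopology weak_topology C) (subtopology weak_topology C) (T s)"
    and K: "K \<noteq> {}" "K \<subseteq> C" "closed K" "convex K" "invariant_under K T"
    and "asymp_attractive_points K T \<noteq> {}"
  shows "\<exists>z\<in>K. \<forall>s. T s z = z"
proof -
  obtain a where a: "a \<in> asymp_attractive_points K T" using assms(9) by blast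
  obtain z where z: "z \<in> K" "\<And>y. y \<in> K \<Longrightarrow> norm (a - z) \<le> norm (a - y)"
    using nearest_point_exists[OF refl K(3,4,1)] by blast
  have "T s z = z" for s
    using nearest_point_fixed_point[OF refl sc K(3,4,2) _ cont z] a z(1) K(5)
    by (simp add: asymp_attractive_points_def invariant_under_def)
  with z(1) show ?thesis by blast
qed

theorem proposition3p5:
  fixes C :: "'a::banach set" and T :: "'s::semigroup_mult \<Rightarrow> 'a \<Rightarrow> 'a"
  assumes "reflexive_space TYPE('a)"
    and "strictly_convex_space TYPE('a)"
    and "closed C" and "convex C"
    and "representation_on C T"
    and "\<And>s. continuous_map (subtopology weak_topology C) (subtopology weak_topology C) (T s)"
    and "\<And>s. asymp_nonexpansive_on C (T s)"
  shows "((\<exists>C0. C0 \<noteq> {} \<and> C0 \<subseteq> C \<and> closed C0 \<and> convex C0 \<and> invariant_under C0 T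
              \<and> attractive_points C0 T \<noteq> {})
          \<longleftrightarrow> (\<exists>C0. C0 \<noteq> {} \<and> C0 \<subseteq> C \<and> closed C0 \<and> convex C0 \<and> invariant_under C0 T
              \<and> asymp_attractive_points C0 T \<noteq> {}))
       \<and> ((\<exists>C0. C0 \<noteq> {} \<and> C0 \<subseteq> C \<and> closed C0 \<and> convex C0 \<and> invariant_under C0 T
              \<and> asymp_attractive_points C0 T \<noteq> {})
          \<longleftrightarrow> (\<exists>x\<in>C. \<forall>s. T s x = x))"
proof -
  have attractive_to_asymp_attractive: "\<exists>C0. C0 \<noteq> {} \<and> C0 \<subseteq> C \<and> closed C0 \<and> convex C0
      \<and> invariant_under C0 T \<and> asymp_attractive_points C0 T \<noteq> {}"
    if "\<exists>C0. C0 \<noteq> {} \<and> C0 \<subseteq> C \<and> closed C0 \<and> convex C0 \<and> invariant_under C0 T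
      \<and> attractive_points C0 T \<noteq> {}"
    using that attractive_points_subset_asymp_attractive_points by blast
  have asymp_attractive_to_fixed: "\<exists>x\<in>C. \<forall>s. T s x = x"
    if "\<exists>C0. C0 \<noteq> {} \<and> C0 \<subseteq> C \<and> closed C0 \<and> convex C0 \<and> invariant_under C0 T
      \<and> asymp_attractive_points C0 T \<noteq> {}"
  proof -
    from that obtain C0
      where C0: "C0 \<noteq> {}" "C0 \<subseteq> C" "closed C0" "convex C0" "invariant_under C0 T"
        "asymp_attractive_points C0 T \<noteq> {}" by blast
    with common_fixed_point_if_asymp_attractive_points[OF assms(1,2,6) C0] show ?thesis by blast
  qed
  have fixed_to_attractive: "\<exists>C0. C0 \<noteq> {} \<and> C0 \<subseteq> C \<and> closed C0 \<and> convex C0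
      \<and> invariant_under C0 T \<and> attractive_points C0 T \<noteq> {}"
    if "\<exists>x\<in>C. \<forall>s. T s x = x"
  proof -
    from that obtain x where "x \<in> C" "\<forall>s. T s x = x" by blast
    then show ?thesis
      by (intro exI[of _ "{x}"]) (auto simp: invariant_under_def attractive_points_def)
  qed
  show ?thesis
  proof (intro conjI iffI)
  qed (erule attractive_to_asymp_attractive asymp_attractive_to_fixed
      fixed_to_attractive[OF asymp_attractive_to_fixed]
      attractive_to_asymp_attractive[OF fixed_to_attractive])+
qed

end
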